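(* Let $\mathcal{G}_N$ be the Newton group of transformations of $\mathbb{R}^4=\mathbb{R}^3\times\mathbb{R}$ of the form $(\mathbf{x},x^4)\mapsto(S\mathbf{x},x^4)+b$ ($S\in SO(3)$, $b\in\mathbb{R}^4$), and $\mathcal{G}$ the Galilei group of transformations $x\mapsto\begin{pmatrix}S&w\\0^T&1\end{pmatrix}x+b$ ($S\in SO(3)$, $w\in\mathbb{R}^3$, $b\in\mathbb{R}^4$). Say an equivalence relation $\sim$ on $\mathbb{R}^4$ satisfies the causality condition if $x\sim y$ implies $x^4=y^4$ (causally connectible events, i.e. events with different time coordinate, are never equivalent). Then the only nontrivial $\mathcal{G}_N$-invariant (respectively, the only nontrivial $\mathcal{G}$-invariant) equivalence relation on $\mathbb{R}^4$ satisfying the causality condition is absolute simultaneity: $x\sim y\iff x^4=y^4$.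
   Context: An equivalence relation is invariant under a group of transformations if $x\sim y$ implies $h(x)\sim h(y)$ for all $x,y$ and all $h$ in the group. It is trivial if it is the total relation or the identity relation (diagonal). *)

theory Defs
  imports "HOL-Analysis.Analysis"
begin

text \<open>Spacetime R^4 = R^3 x R: a point is (spatial vector, time coordinate x^4).\<close>
type_synonym event = "(real^3) \<times> real"

definition SO3 :: "(real^3^3) set" where
  "SO3 = {S. orthogonal_matrix S \<and> det S = 1}"

definition newton_group :: "(event \<Rightarrow> event) set" where
  "newton_group = {h. \<exists>S \<in> SO3. \<exists>b1 :: real^3. \<exists>b2 :: real.
      h = (\<lambda>(x, t). (S *v x + b1, t + b2))}"

definition galilei_group :: "(event \<Rightarrow> event) set" where
  "galilei_group = {h. \<exists>S \<in> SO3. \<exists>w :: real^3. \<exists>b1 :: real^3. \<exists>b2 :: real.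
      h = (\<lambda>(x, t). (S *v x + t *\<^sub>R w + b1, t + b2))}"

definition invariant_under :: "('a \<Rightarrow> 'a) set \<Rightarrow> 'a rel \<Rightarrow> bool" where
  "invariant_under H R \<longleftrightarrow> (\<forall>h \<in> H. \<forall>x y. (x, y) \<in> R \<longrightarrow> (h x, h y) \<in> R)"

definition trivial_rel :: "'a rel \<Rightarrow> bool" where
  "trivial_rel R \<longleftrightarrow> R = UNIV \<or> R = Id"

definition causality :: "event rel \<Rightarrow> bool" where
  "causality R \<longleftrightarrow> (\<forall>x y. (x, y) \<in> R \<longrightarrow> snd x = snd y)"

definition abs_simultaneity :: "event rel" where
  "abs_simultaneity = {(x, y). snd x = snd y}"

end

theory Submission
  imports Defs
begin

text \<open>Translation invariance reduces an invariant causal relation to the set \<open>D\<close> of spatial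
displacements \<open>d\<close> with \<open>(0, 0) \<sim> (d, 0)\<close>; transitivity makes \<open>D\<close> closed under addition and
rotation invariance makes it closed under rotations. If the relation is not the identity, \<open>D\<close>
contains some \<open>d \<noteq> 0\<close>, hence the whole sphere of radius \<open>|d|\<close>. In dimension at least two every
vector of norm at most \<open>2|d|\<close> is a sum of two vectors on that sphere, and multiples of this ball
exhaust space, so \<open>D\<close> is everything and the relation is absolute simultaneity. The Galilei
group contains the Newton group and preserves time differences, which settles the second
claim.\<close>

lemma sum_of_two_vectors_of_norm:
  fixes e :: "'a::euclidean_space"
  assumes "2 \<le> DIM('a)" and "norm e \<le> 2 * r"
  obtains p q where "norm p = r" "norm q = r" "p + q = e"
proof -
  obtain u :: 'a where "u \<noteq> 0" and "orthogonal e u"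
    using orthogonal_to_vector_exists assms(1) by blast
  then have eu: "inner e u = 0" "inner u e = 0"
    by (auto simp: orthogonal_def inner_commute)
  have "(norm e / 2)^2 \<le> r^2"
    using assms(2) by (intro power_mono) auto
  define c where "c = sqrt (r^2 - (norm e / 2)^2) / norm u"
  \<comment> \<open>chosen so that by Pythagoras both \<open>e/2 + c u\<close> and \<open>e/2 - c u\<close> have norm \<open>r\<close>\<close>
  have c: "c^2 * inner u u = r^2 - (1/2)^2 * inner e e"
    using \<open>u \<noteq> 0\<close> \<open>(norm e / 2)^2 \<le> r^2\<close>
    by (simp add: c_def power_divide power2_norm_eq_inner[symmetric])
  have r: "r \<ge> 0"
    using assms(2) norm_ge_zero[of e] by linarith
  have "norm ((1/2) *\<^sub>R e + s *\<^sub>R c *\<^sub>R u) = r" if "s = 1 \<or> s = -1" for s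
  proof -
    have "(norm ((1/2) *\<^sub>R e + s *\<^sub>R c *\<^sub>R u))^2 = r^2"
      unfolding power2_norm_eq_inner using that c
      by (auto simp: inner_add_left inner_add_right eu power2_eq_square)
    then show ?thesis
      using r by (simp add: power2_eq_iff_nonneg)
  qed
  moreover have "((1/2) *\<^sub>R e + 1 *\<^sub>R c *\<^sub>R u) + ((1/2) *\<^sub>R e + (-1) *\<^sub>R c *\<^sub>R u) = e"
    by (simp flip: scaleR_left_distrib)
  ultimately show thesis
    using that by blast
qed

lemma additively_closed_superset_of_cball_eq_UNIV:
  fixes S :: "'a::real_normed_vector set"
  assumes add: "\<And>x y. x \<in> S \<Longrightarrow> y \<in> S \<Longrightarrow> x + y \<in> S"
    and "cball 0 \<epsilon> \<subseteq> S" and "\<epsilon> > 0"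
  shows "S = UNIV"
proof -
  have multiple: "of_nat (Suc m) *\<^sub>R x \<in> S" if "x \<in> S" for m x
  proof (induction m)
    case (Suc m)
    have "of_nat (Suc (Suc m)) *\<^sub>R x = of_nat (Suc m) *\<^sub>R x + x"
      by (metis add.commute of_nat_Suc scaleR_add_left scaleR_one)
    then show ?case
      using add[OF Suc that] by simp
  qed (simp add: that)
  have "e \<in> S" for e
  proof -
    obtain m :: nat where "norm e / \<epsilon> < m"
      using reals_Archimedean2 by blast
    then have "norm e / \<epsilon> < Suc m"
      by simp
    then have "norm ((1 / Suc m) *\<^sub>R e) \<le> \<epsilon>"
      using \<open>\<epsilon> > 0\<close> by (simp add: field_simps)
    then have "of_nat (Suc m) *\<^sub>R ((1 / Suc m) *\<^sub>R e) \<in> S"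
      using assms(2) by (intro multiple) auto
    then show ?thesis
      by simp
  qed
  then show ?thesis
    by blast
qed

lemma rotation_matrix_exists:
  fixes a b :: "real^'n"
  assumes "2 \<le> CARD('n)" and "norm a = norm b"
  obtains Q where "rotation_matrix Q" "Q *v a = b"
proof -
  obtain f where f: "orthogonal_transformation f" "det (matrix f) = 1" "f a = b"
    using rotation_exists assms by blast
  then have "linear f"
    by (simp add: orthogonal_transformation)
  then show thesis
    using that f by (simp add: rotation_matrix_def orthogonal_transformation_matrix)
qed

lemma rotation_invariant_additively_closed_eq_UNIV:
  fixes S :: "(real^'n) set"
  assumes "2 \<le> CARD('n)"
    and add: "\<And>x y. x \<in> S \<Longrightarrow> y \<in> S \<Longrightarrow> x + y \<in> S"
    and rot: "\<And>Q x. rotation_matrix Q \<Longrightarrow> x \<in> S \<Longrightarrow> Q *v x \<in> S"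
    and "d \<in> S" "d \<noteq> 0"
  shows "S = UNIV"
proof (rule additively_closed_superset_of_cball_eq_UNIV[OF add])
  have sphere: "x \<in> S" if "norm x = norm d" for x
    using rotation_matrix_exists[OF assms(1) that[symmetric]] rot \<open>d \<in> S\<close> by metis
  show "cball 0 (2 * norm d) \<subseteq> S"
  proof
    fix e :: "real^'n" assume "e \<in> cball 0 (2 * norm d)"
    then obtain p q where "norm p = norm d" "norm q = norm d" "p + q = e"
      using sum_of_two_vectors_of_norm[of e "norm d"] assms(1) by auto
    then show "e \<in> S"
      using sphere add by blast
  qed
  show "2 * norm d > 0"
    using \<open>d \<noteq> 0\<close> by simp
qed

lemma SO3_eq_rotation_matrices: "SO3 = {Q. rotation_matrix Q}"
  by (simp add: SO3_def rotation_matrix_def)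

lemma newton_group_subset_galilei_group: "newton_group \<subseteq> galilei_group"
proof
  fix h assume "h \<in> newton_group"
  then obtain S b \<tau> where "S \<in> SO3" "h = (\<lambda>(x, t). (S *v x + b, t + \<tau>))"
    unfolding newton_group_def by blast
  then show "h \<in> galilei_group"
    unfolding galilei_group_def
    by (intro CollectI bexI[of _ S] exI[of _ 0] exI[of _ b] exI[of _ \<tau>]) auto
qed

lemma invariant_under_subset:
  "H \<subseteq> K \<Longrightarrow> invariant_under K R \<Longrightarrow> invariant_under H R"
  unfolding invariant_under_def by blast

lemma newton_invariant_translate:
  assumes "invariant_under newton_group R" and "((a, s), (c, t)) \<in> R"
  shows "((a + b, s + \<tau>), (c + b, t + \<tau>)) \<in> R"
proof -
  have "mat 1 \<in> SO3"
    by (simp add: SO3_def orthogonal_matrix_id det_I)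
  then have "(\<lambda>(x, t). (mat 1 *v x + b, t + \<tau>)) \<in> newton_group"
    unfolding newton_group_def by blast
  with assms show ?thesis
    unfolding invariant_under_def by fastforce
qed

lemma newton_invariant_rotate:
  assumes "invariant_under newton_group R" and "((a, s), (c, t)) \<in> R"
    and "rotation_matrix Q"
  shows "((Q *v a, s), (Q *v c, t)) \<in> R"
proof -
  have "(\<lambda>(x, t). (Q *v x + 0, t + 0)) \<in> newton_group"
    unfolding newton_group_def SO3_eq_rotation_matrices using assms(3) by blast
  with assms(1,2) show ?thesis
    unfolding invariant_under_def by fastforce
qed

definition simultaneous_displacements :: "event rel \<Rightarrow> (real^3) set" where
  "simultaneous_displacements R = {d. ((0, 0), (d, 0)) \<in> R}"

lemma newton_invariant_mem_iff:
  assumes "invariant_under newton_group R" and "causality R"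
  shows "((a, s), (c, t)) \<in> R \<longleftrightarrow> s = t \<and> c - a \<in> simultaneous_displacements R"
proof
  assume "((a, s), (c, t)) \<in> R"
  moreover from this have "s = t"
    using assms(2) by (auto simp: causality_def)
  ultimately show "s = t \<and> c - a \<in> simultaneous_displacements R"
    using newton_invariant_translate[OF assms(1), of a s c t "- a" "- s"]
    by (simp add: simultaneous_displacements_def)
next
  assume "s = t \<and> c - a \<in> simultaneous_displacements R"
  then show "((a, s), (c, t)) \<in> R"
    using newton_invariant_translate[OF assms(1), of 0 0 "c - a" 0 a s]
    by (simp add: simultaneous_displacements_def)
qed

lemma newton_invariant_eq_abs_simultaneity:
  assumes "equiv UNIV R" and inv: "invariant_under newton_group R"
    and caus: "causality R" and "R \<noteq> Id"
  shows "R = abs_simultaneity"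
proof -
  let ?D = "simultaneous_displacements R"
  note mem_iff = newton_invariant_mem_iff[OF inv caus]
  obtain x y where "(x, y) \<in> R" "x \<noteq> y"
    using \<open>R \<noteq> Id\<close> \<open>equiv UNIV R\<close> by (auto simp: equiv_def refl_on_def)
  then have "fst y - fst x \<in> ?D" "fst y - fst x \<noteq> 0"
    using mem_iff[of "fst x" "snd x" "fst y" "snd y"] by (auto simp: prod_eq_iff)
  then have "?D = UNIV"
  proof (rule rotation_invariant_additively_closed_eq_UNIV[rotated 3])
    show "d + e \<in> ?D" if "d \<in> ?D" "e \<in> ?D" for d e
    proof -
      have "((0, 0), (d, 0)) \<in> R" "((d, 0), (d + e, 0)) \<in> R"
        using that mem_iff by simp_all
      then have "((0, 0), (d + e, 0)) \<in> R"
        using \<open>equiv UNIV R\<close> by (meson equivE transD)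
      then show ?thesis
        using mem_iff by simp
    qed
    show "Q *v d \<in> ?D" if "rotation_matrix Q" "d \<in> ?D" for Q d
      using newton_invariant_rotate[OF inv _ that(1), of 0 0 d 0] that(2)
      by (simp add: simultaneous_displacements_def)
  qed simp
  then show ?thesis
    by (auto simp: mem_iff abs_simultaneity_def)
qed

lemma equiv_abs_simultaneity: "equiv UNIV abs_simultaneity"
  unfolding abs_simultaneity_def equiv_def refl_on_def sym_def trans_def by auto

lemma galilei_invariant_abs_simultaneity: "invariant_under galilei_group abs_simultaneity"
  unfolding invariant_under_def galilei_group_def abs_simultaneity_def by auto

lemma causality_abs_simultaneity: "causality abs_simultaneity"
  unfolding causality_def abs_simultaneity_def by simp

lemma nontrivial_abs_simultaneity: "\<not> trivial_rel abs_simultaneity"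
proof -
  have "((0, 0), (0, 1)) \<notin> abs_simultaneity"
    by (simp add: abs_simultaneity_def)
  moreover have "((0, 0), (axis 1 1, 0)) \<in> abs_simultaneity"
    by (simp add: abs_simultaneity_def)
  moreover have "axis 1 (1::real) \<noteq> (0::real^3)"
    by (simp add: axis_eq_0_iff)
  ultimately show ?thesis
    unfolding trivial_rel_def by auto
qed

lemma newton_invariant_causal_nontrivial_iff:
  "equiv UNIV R \<and> invariant_under newton_group R \<and> causality R \<and> \<not> trivial_rel R
     \<longleftrightarrow> R = abs_simultaneity"
proof
  show "R = abs_simultaneity"
    if "equiv UNIV R \<and> invariant_under newton_group R \<and> causality R \<and> \<not> trivial_rel R"
    using that newton_invariant_eq_abs_simultaneity unfolding trivial_rel_def by blast
  have "invariant_under newton_group abs_simultaneity"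
    using invariant_under_subset newton_group_subset_galilei_group
      galilei_invariant_abs_simultaneity .
  then show "equiv UNIV R \<and> invariant_under newton_group R \<and> causality R \<and> \<not> trivial_rel R"
    if "R = abs_simultaneity"
    using that equiv_abs_simultaneity causality_abs_simultaneity nontrivial_abs_simultaneity
    by simp
qed

lemma galilei_invariant_causal_nontrivial_iff:
  "equiv UNIV R \<and> invariant_under galilei_group R \<and> causality R \<and> \<not> trivial_rel R
     \<longleftrightarrow> R = abs_simultaneity"
proof
  show "R = abs_simultaneity"
    if "equiv UNIV R \<and> invariant_under galilei_group R \<and> causality R \<and> \<not> trivial_rel R"
    using that invariant_under_subset[OF newton_group_subset_galilei_group]
      newton_invariant_causal_nontrivial_iff by blast
  show "equiv UNIV R \<and> invariant_under galilei_group R \<and> causality R \<and> \<not> trivial_rel R"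
    if "R = abs_simultaneity"
    using that equiv_abs_simultaneity galilei_invariant_abs_simultaneity
      causality_abs_simultaneity nontrivial_abs_simultaneity
    by simp
qed

theorem proposition3p11:
  shows "{R. equiv UNIV R \<and> invariant_under newton_group R \<and> causality R \<and> \<not> trivial_rel R}
           = {abs_simultaneity}
       \<and> {R. equiv UNIV R \<and> invariant_under galilei_group R \<and> causality R \<and> \<not> trivial_rel R}
           = {abs_simultaneity}"
  by (simp only: newton_invariant_causal_nontrivial_iff galilei_invariant_causal_nontrivial_iff
      singleton_conv simp_thms)

end
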